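(* Let $N\ge3$ and $p\in(0,2)$. There exists $C>0$ such that $$\langle L_-W,W\rangle_{L^2(\Gamma)}\ge C\|W\|_{H^1(\Gamma)}^2\quad\text{for every } W\in H^1_\Gamma\cap(L^2_c)^*,$$ where $(L^2_c)^*=\{W\in L^2(\Gamma):\langle W,\partial_\omega\Phi_\omega|_{\omega=1}\rangle_{L^2(\Gamma)}=0\}$.
   Context: Let $\Gamma$ be the star graph of $N$ half-lines joined at a single vertex, each edge parametrized by $x\in[0,\infty)$ with vertex at $x=0$. Functions are real-valued vectors $W=(w_1,\dots,w_N)^T$; $L^2(\Gamma)=\oplus_{j=1}^NL^2(\mathbb{R}^+)$ with $\langle F,G\rangle_{L^2(\Gamma)}=\sum_j\int_0^\infty f_jg_j\,dx$, $H^1(\Gamma)=\oplus_jH^1(\mathbb{R}^+)$, $H^1_\Gamma=\{W\in H^1(\Gamma):w_1(0)=\dots=w_N(0)\}$. Let $\phi(x)=\operatorname{sech}^{1/p}(px)$, $\Phi=\phi\,(1,\dots,1)^T$, and for $\omega>0$ let $\Phi_\omega(x)=\omega^{1/(2p)}\Phi(\omega^{1/2}x)$. The quadratic form of $L_-$ is $\langle L_-W,W\rangle_{L^2(\Gamma)}=\sum_{j=1}^N\int_0^\infty\big[(w_j')^2+w_j^2-(p+1)\phi^{2p}w_j^2\big]dx$ for $W\in H^1_\Gamma$. *)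

theory Defs
  imports "HOL-Analysis.Analysis"
begin

text \<open>Functions on the half-line [0,\<infinity>) are real functions of which only the
values on {0..} matter.  A function on the star graph with N edges is
W :: nat \<Rightarrow> real \<Rightarrow> real, edge j < N being W j.\<close>

definition L2_halfline :: "(real \<Rightarrow> real) \<Rightarrow> bool" where
  "L2_halfline f \<longleftrightarrow> set_borel_measurable lborel {0..} f \<and>
     set_integrable lborel {0..} (\<lambda>x. (f x)\<^sup>2)"

text \<open>f \<in> H^1(R^+) with (weak) derivative g: f and g are in L^2(0,\<infinity>), g is
locally integrable and f is its absolutely continuous primitive on [0,\<infinity>)
(f is the continuous representative).\<close>
definition H1_halfline_deriv :: "(real \<Rightarrow> real) \<Rightarrow> (real \<Rightarrow> real) \<Rightarrow> bool" where
  "H1_halfline_deriv f g \<longleftrightarrow> L2_halfline f \<and> L2_halfline g \<and>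
     (\<forall>x\<ge>0. set_integrable lborel {0..x} g \<and>
             f x = f 0 + (\<integral>t\<in>{0..x}. g t \<partial>lborel))"

definition phi :: "real \<Rightarrow> real \<Rightarrow> real" where
  "phi p x = (1 / cosh (p * x)) powr (1 / p)"

definition Phi_omega :: "real \<Rightarrow> real \<Rightarrow> real \<Rightarrow> real" where
  "Phi_omega p \<omega> x = \<omega> powr (1 / (2 * p)) * phi p (sqrt \<omega> * x)"

text \<open>Component of \<partial>_\<omega> \<Phi>_\<omega> at \<omega> = 1 (same on every edge).\<close>
definition dPhi :: "real \<Rightarrow> real \<Rightarrow> real" where
  "dPhi p x = deriv (\<lambda>\<omega>. Phi_omega p \<omega> x) 1"

definition L2_inner :: "nat \<Rightarrow> (nat \<Rightarrow> real \<Rightarrow> real) \<Rightarrow> (nat \<Rightarrow> real \<Rightarrow> real) \<Rightarrow> real" where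
  "L2_inner N F G = (\<Sum>j<N. \<integral>x\<in>{0..}. F j x * G j x \<partial>lborel)"

definition H1_Gamma_deriv :: "nat \<Rightarrow> (nat \<Rightarrow> real \<Rightarrow> real) \<Rightarrow> (nat \<Rightarrow> real \<Rightarrow> real) \<Rightarrow> bool" where
  "H1_Gamma_deriv N W W' \<longleftrightarrow> (\<forall>j<N. H1_halfline_deriv (W j) (W' j)) \<and>
     (\<forall>j<N. \<forall>k<N. W j 0 = W k 0)"

definition H1_norm_sq :: "nat \<Rightarrow> (nat \<Rightarrow> real \<Rightarrow> real) \<Rightarrow> (nat \<Rightarrow> real \<Rightarrow> real) \<Rightarrow> real" where
  "H1_norm_sq N W W' = (\<Sum>j<N. \<integral>x\<in>{0..}. (W' j x)\<^sup>2 + (W j x)\<^sup>2 \<partial>lborel)"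

definition Lminus_form :: "real \<Rightarrow> nat \<Rightarrow> (nat \<Rightarrow> real \<Rightarrow> real) \<Rightarrow> (nat \<Rightarrow> real \<Rightarrow> real) \<Rightarrow> real" where
  "Lminus_form p N W W' = (\<Sum>j<N. \<integral>x\<in>{0..}.
      (W' j x)\<^sup>2 + (W j x)\<^sup>2 - (p + 1) * (phi p x) powr (2 * p) * (W j x)\<^sup>2 \<partial>lborel)"

end

(* On each edge the form is a perfect square: since phi' = -tanh(px) phi and phi^(2p) = sech^2(px),
   integrating the cross term by parts turns (w')^2 + w^2 - (p+1) phi^(2p) w^2 into
   (w' + tanh(px) w)^2, i.e. L_- = A^* A with A = d/dx + tanh(px) and A phi = 0.
   Split w_j = c phi + r_j, where c is the common vertex value. Then r_j(0) = 0 and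
   r_j' + tanh(px) r_j = A w_j, and this first order equation bounds ||r_j|| by ||A w_j||.
   The vertex value is controlled by the orthogonality condition: <phi, d_omega Phi_omega> equals
   (1/(2p) - 1/4) ||phi||^2, which is nonzero because p < 2, and
   N c <phi, d_omega Phi_omega> = - sum_j <r_j, d_omega Phi_omega>.
   So the H^1 norm of W is bounded by sum_j ||A w_j||^2, which is the form.
   The argument only needs N >= 1. *)

theory Submission
  imports Defs "HOL-Real_Asymp.Real_Asymp"
begin

section \<open>Primitives on the half-line\<close>

definition halfline_primitive :: "(real \<Rightarrow> real) \<Rightarrow> (real \<Rightarrow> real) \<Rightarrow> bool" where
  "halfline_primitive F f \<longleftrightarrow> (\<forall>x\<ge>0. set_integrable lborel {0..x} f \<and>
      F x = F 0 + (LINT t:{0..x}|lborel. f t))"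

lemma halfline_primitiveD:
  assumes "halfline_primitive F f" "0 \<le> x"
  shows "set_integrable lborel {0..x} f" "F x = F 0 + (LINT t:{0..x}|lborel. f t)"
  using assms unfolding halfline_primitive_def by blast+

lemma H1_halfline_deriv_primitive: "H1_halfline_deriv w w' \<Longrightarrow> halfline_primitive w w'"
  unfolding H1_halfline_deriv_def halfline_primitive_def by blast

lemma halfline_primitive_of_deriv:
  assumes "\<And>x. 0 \<le> x \<Longrightarrow> (F has_real_derivative f x) (at x)" "\<And>x. 0 \<le> x \<Longrightarrow> isCont f x"
  shows "halfline_primitive F f"
  unfolding halfline_primitive_def
proof (intro allI impI conjI)
  fix x :: real assume x: "0 \<le> x"
  have "continuous_on {0..x} f"
    using assms(2) by (intro continuous_at_imp_continuous_on) auto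
  then show "set_integrable lborel {0..x} f" by (rule borel_integrable_atLeastAtMost')
  have "(\<integral>t. f t * indicator {0..x} t \<partial>lborel) = F x - F 0"
    by (rule integral_FTC_Icc_real) (use x assms in auto)
  then show "F x = F 0 + (LINT t:{0..x}|lborel. f t)"
    unfolding set_lebesgue_integral_def by (simp add: mult.commute)
qed

lemma halfline_primitive_diff:
  assumes "halfline_primitive F f" "halfline_primitive G g"
  shows "halfline_primitive (\<lambda>x. F x - G x) (\<lambda>x. f x - g x)"
  unfolding halfline_primitive_def
proof (intro allI impI conjI)
  fix x :: real assume "0 \<le> x"
  note F = halfline_primitiveD[OF assms(1) this] and G = halfline_primitiveD[OF assms(2) this]
  show "set_integrable lborel {0..x} (\<lambda>t. f t - g t)" using F(1) G(1) by simp
  show "F x - G x = F 0 - G 0 + (LINT t:{0..x}|lborel. f t - g t)"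
    using F G by (simp add: set_integral_diff(2))
qed

lemma halfline_primitive_cmult:
  assumes "halfline_primitive F f"
  shows "halfline_primitive (\<lambda>x. c * F x) (\<lambda>x. c * f x)"
  unfolding halfline_primitive_def
proof (intro allI impI conjI)
  fix x :: real assume "0 \<le> x"
  note F = halfline_primitiveD[OF assms this]
  show "set_integrable lborel {0..x} (\<lambda>t. c * f t)" using F(1) by simp
  show "c * F x = c * F 0 + (LINT t:{0..x}|lborel. c * f t)"
    using F(2) by (simp add: algebra_simps)
qed

lemma lborel_pair_integrable_mult:
  fixes F G :: "real \<Rightarrow> real"
  assumes F: "integrable lborel F" and G: "integrable lborel G"
  shows "integrable (lborel \<Otimes>\<^sub>M lborel) (\<lambda>(s,t). F s * G t)"
proof (rule lborel_pair.Fubini_integrable)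
  have [measurable]: "F \<in> borel_measurable lborel" "G \<in> borel_measurable lborel"
    using F G by auto
  show "(\<lambda>(s,t). F s * G t) \<in> borel_measurable (lborel \<Otimes>\<^sub>M lborel)"
    by measurable
  have "integrable lborel (\<lambda>s. \<bar>F s\<bar> * (\<integral>t. \<bar>G t\<bar> \<partial>lborel))"
    using F by (intro integrable_mult_left integrable_abs)
  then show "integrable lborel (\<lambda>s. \<integral>t. norm ((\<lambda>(s,t). F s * G t) (s, t)) \<partial>lborel)"
    by (simp add: abs_mult)
  show "AE s in lborel. integrable lborel (\<lambda>t. (\<lambda>(s,t). F s * G t) (s, t))"
    using G by auto
qed

lemma set_integral_triangle_swap:
  fixes f g :: "real \<Rightarrow> real"
  assumes f: "set_integrable lborel {0..X} f" and g: "set_integrable lborel {0..X} g"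
  shows "set_integrable lborel {0..X} (\<lambda>s. f s * (LINT t:{0..s}|lborel. g t))"
    and "(LINT s:{0..X}|lborel. f s * (LINT t:{0..s}|lborel. g t)) =
         (LINT t:{0..X}|lborel. g t * (LINT s:{t..X}|lborel. f s))"
proof -
  define k where "k s t = indicator {0..X} s * f s * (indicator {0..s} t * g t)" for s t
  have k_swap: "k s t = indicator {0..X} t * g t * (indicator {t..X} s * f s)" for s t
    unfolding k_def by (auto simp: indicator_def)
  have "{x::real\<times>real. snd x \<le> fst x} \<in> sets (lborel \<Otimes>\<^sub>M lborel)"
    using borel_measurable_le[of snd "lborel \<Otimes>\<^sub>M lborel" fst] by (simp add: space_pair_measure)
  then have "integrable (lborel \<Otimes>\<^sub>M lborel)
      (\<lambda>x. indicator {x. snd x \<le> fst x} x *\<^sub>R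
        (\<lambda>(s,t). (indicator {0..X} s * f s) * (indicator {0..X} t * g t)) x)"
    using f g unfolding set_integrable_def
    by (intro integrable_mult_indicator lborel_pair_integrable_mult) simp_all
  also have "(\<lambda>x. indicator {x. snd x \<le> fst x} x *\<^sub>R
        (\<lambda>(s,t). (indicator {0..X} s * f s) * (indicator {0..X} t * g t)) x) = case_prod k"
    unfolding k_def by (auto simp: indicator_def fun_eq_iff)
  finally have k: "integrable (lborel \<Otimes>\<^sub>M lborel) (case_prod k)" .
  have inner_t: "(\<integral>t. k s t \<partial>lborel) = indicator {0..X} s * (f s * (LINT t:{0..s}|lborel. g t))" for s
    unfolding k_def set_lebesgue_integral_def by simp
  have inner_s: "(\<integral>s. k s t \<partial>lborel) = indicator {0..X} t * (g t * (LINT s:{t..X}|lborel. f s))" for t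
    unfolding k_swap set_lebesgue_integral_def by simp
  show "set_integrable lborel {0..X} (\<lambda>s. f s * (LINT t:{0..s}|lborel. g t))"
    using lborel_pair.integrable_fst[OF k] unfolding inner_t set_integrable_def by simp
  show "(LINT s:{0..X}|lborel. f s * (LINT t:{0..s}|lborel. g t)) =
         (LINT t:{0..X}|lborel. g t * (LINT s:{t..X}|lborel. f s))"
    using lborel_pair.Fubini_integral[OF k] unfolding inner_t inner_s set_lebesgue_integral_def by simp
qed

lemma set_integral_Un_point:
  fixes f :: "real \<Rightarrow> real"
  assumes "set_integrable lborel (A \<union> B) f" "A \<in> sets lborel" "B \<in> sets lborel" "A \<inter> B \<subseteq> {t}"
  shows "(LINT x:A \<union> B|lborel. f x) = (LINT x:A|lborel. f x) + (LINT x:B|lborel. f x)"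
proof (rule set_integral_Un_AE)
  show "AE x in lborel. \<not> (x \<in> A \<and> x \<in> B)"
    using AE_lborel_singleton[of t] by eventually_elim (use assms(4) in blast)
qed (use assms in \<open>auto intro: set_integrable_subset\<close>)

lemma halfline_primitive_integral_Icc:
  assumes F: "halfline_primitive F f" and t: "0 \<le> t" "t \<le> X"
  shows "(LINT s:{t..X}|lborel. f s) = F X - F t"
proof -
  have "{0..t} \<union> {t..X} = {0..X}" using t by auto
  then have "(LINT s:{0..X}|lborel. f s) = (LINT s:{0..t}|lborel. f s) + (LINT s:{t..X}|lborel. f s)"
    using set_integral_Un_point[of "{0..t}" "{t..X}" f t] halfline_primitiveD(1)[OF F, of X] t by auto
  then show ?thesis
    using halfline_primitiveD(2)[OF F t(1)] halfline_primitiveD(2)[OF F, of X] t by simp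
qed

lemma halfline_primitive_integral_mult:
  assumes F: "halfline_primitive F f" and G: "halfline_primitive G g" and X: "0 \<le> X"
  shows "set_integrable lborel {0..X} (\<lambda>s. f s * G s)"
    and "(LINT s:{0..X}|lborel. f s * G s) = G 0 * (F X - F 0) + (LINT t:{0..X}|lborel. g t * (F X - F t))"
proof -
  note fX = halfline_primitiveD(1)[OF F X] and gX = halfline_primitiveD(1)[OF G X]
  note swap = set_integral_triangle_swap[OF fX gX]
  have G_eq: "f s * G s = G 0 * f s + f s * (LINT t:{0..s}|lborel. g t)" if "s \<in> {0..X}" for s
    using halfline_primitiveD(2)[OF G, of s] that by (simp add: algebra_simps)
  have "set_integrable lborel {0..X} (\<lambda>s. G 0 * f s + f s * (LINT t:{0..s}|lborel. g t))"
    using fX swap(1) by simp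
  then show "set_integrable lborel {0..X} (\<lambda>s. f s * G s)"
    by (rule set_integrable_cong[THEN iffD1, rotated 3]) (simp_all add: G_eq)
  have "(LINT s:{0..X}|lborel. f s * G s) =
        (LINT s:{0..X}|lborel. G 0 * f s + f s * (LINT t:{0..s}|lborel. g t))"
    by (rule set_lebesgue_integral_cong) (simp_all add: G_eq)
  also have "\<dots> = G 0 * (F X - F 0) + (LINT t:{0..X}|lborel. g t * (LINT s:{t..X}|lborel. f s))"
    using fX swap halfline_primitiveD(2)[OF F X] by (simp add: set_integral_add(2))
  also have "(LINT t:{0..X}|lborel. g t * (LINT s:{t..X}|lborel. f s)) =
             (LINT t:{0..X}|lborel. g t * (F X - F t))"
    by (rule set_lebesgue_integral_cong) (simp_all add: halfline_primitive_integral_Icc[OF F])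
  finally show "(LINT s:{0..X}|lborel. f s * G s) = G 0 * (F X - F 0) + (LINT t:{0..X}|lborel. g t * (F X - F t))" .
qed

lemma halfline_primitive_mult:
  assumes F: "halfline_primitive F f" and G: "halfline_primitive G g"
  shows "halfline_primitive (\<lambda>x. F x * G x) (\<lambda>x. f x * G x + F x * g x)"
  unfolding halfline_primitive_def
proof (intro allI impI conjI)
  fix X :: real assume X: "0 \<le> X"
  note fG = halfline_primitive_integral_mult[OF F G X]
  note gF = halfline_primitive_integral_mult[OF G F X]
  have Fg: "set_integrable lborel {0..X} (\<lambda>s. F s * g s)"
    using gF(1) by (simp add: mult.commute)
  show "set_integrable lborel {0..X} (\<lambda>x. f x * G x + F x * g x)"
    using fG(1) Fg by simp
  have g: "set_integrable lborel {0..X} g" "G X = G 0 + (LINT t:{0..X}|lborel. g t)"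
    using halfline_primitiveD[OF G X] by simp_all
  have "(LINT t:{0..X}|lborel. g t * (F X - F t)) = F X * (G X - G 0) - (LINT t:{0..X}|lborel. F t * g t)"
  proof -
    have "(LINT t:{0..X}|lborel. g t * (F X - F t)) = (LINT t:{0..X}|lborel. F X * g t - F t * g t)"
      by (simp add: algebra_simps)
    also have "\<dots> = F X * (LINT t:{0..X}|lborel. g t) - (LINT t:{0..X}|lborel. F t * g t)"
      using g(1) Fg by (simp add: set_integral_diff(2))
    finally show ?thesis using g(2) by simp
  qed
  then show "F X * G X = F 0 * G 0 + (LINT x:{0..X}|lborel. f x * G x + F x * g x)"
    using fG Fg by (simp add: set_integral_add(2) algebra_simps)
qed


section \<open>Square integrable functions on the half-line\<close>

lemma L2_halfline_iff:
  "L2_halfline f \<longleftrightarrow>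
     f \<in> borel_measurable (restrict_space lborel {0..}) \<and> set_integrable lborel {0..} (\<lambda>x. (f x)\<^sup>2)"
  by (simp add: L2_halfline_def set_borel_measurable_def borel_measurable_restrict_space_iff)

lemma L2_halfline_integrable_sq: "L2_halfline f \<Longrightarrow> set_integrable lborel {0..} (\<lambda>x. (f x)\<^sup>2)"
  by (simp add: L2_halfline_def)

lemma L2_halfline_measurable: "L2_halfline f \<Longrightarrow> f \<in> borel_measurable (restrict_space lborel {0..})"
  by (simp add: L2_halfline_iff)

lemma borel_measurable_halfline_continuous:
  "continuous_on UNIV h \<Longrightarrow> h \<in> borel_measurable (restrict_space lborel {0..})"
  by (intro measurable_restrict_space1) (simp add: borel_measurable_continuous_onI)

lemma set_integrable_halfline_dominated:
  fixes f g :: "real \<Rightarrow> real"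
  assumes "set_integrable lborel {0..} g" "f \<in> borel_measurable (restrict_space lborel {0..})"
    and "\<And>x. 0 \<le> x \<Longrightarrow> \<bar>f x\<bar> \<le> g x"
  shows "set_integrable lborel {0..} f"
proof (rule set_integrable_bound[OF assms(1)])
  show "set_borel_measurable lborel {0..} f"
    using assms(2) by (simp add: set_borel_measurable_def borel_measurable_restrict_space_iff)
  show "AE x in lborel. x \<in> {0..} \<longrightarrow> norm (f x) \<le> norm (g x)"
    using assms(3) by (auto intro!: AE_I2 order_trans[OF _ abs_ge_self])
qed

lemma L2_halfline_integrable_mult:
  assumes "L2_halfline f" "L2_halfline g"
  shows "set_integrable lborel {0..} (\<lambda>x. f x * g x)"
proof (rule set_integrable_halfline_dominated)
  show "set_integrable lborel {0..} (\<lambda>x. (f x)\<^sup>2 / 2 + (g x)\<^sup>2 / 2)"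
    using assms by (simp add: L2_halfline_integrable_sq)
  show "(\<lambda>x. f x * g x) \<in> borel_measurable (restrict_space lborel {0..})"
    using assms by (intro borel_measurable_times L2_halfline_measurable)
  show "\<bar>f x * g x\<bar> \<le> (f x)\<^sup>2 / 2 + (g x)\<^sup>2 / 2" for x
    using zero_le_power2[of "\<bar>f x\<bar> - \<bar>g x\<bar>"] by (simp add: power2_eq_square abs_mult algebra_simps)
qed

lemma L2_halfline_add:
  assumes "L2_halfline f" "L2_halfline g"
  shows "L2_halfline (\<lambda>x. f x + g x)"
  unfolding L2_halfline_iff
proof
  show "(\<lambda>x. f x + g x) \<in> borel_measurable (restrict_space lborel {0..})"
    using assms by (intro borel_measurable_add L2_halfline_measurable)
  show "set_integrable lborel {0..} (\<lambda>x. (f x + g x)\<^sup>2)"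
  proof (rule set_integrable_halfline_dominated)
    show "set_integrable lborel {0..} (\<lambda>x. 2 * (f x)\<^sup>2 + 2 * (g x)\<^sup>2)"
      using assms by (simp add: L2_halfline_integrable_sq)
    show "(\<lambda>x. (f x + g x)\<^sup>2) \<in> borel_measurable (restrict_space lborel {0..})"
      using assms by (intro borel_measurable_power borel_measurable_add L2_halfline_measurable)
    have "(f x + g x)\<^sup>2 \<le> 2 * (f x)\<^sup>2 + 2 * (g x)\<^sup>2" for x
      using zero_le_power2[of "f x - g x"] by (simp add: power2_eq_square algebra_simps)
    then show "\<bar>(f x + g x)\<^sup>2\<bar> \<le> 2 * (f x)\<^sup>2 + 2 * (g x)\<^sup>2" for x
      by simp
  qed
qed

lemma set_integrable_halfline_bounded_mult:
  fixes f h :: "real \<Rightarrow> real"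
  assumes f: "set_integrable lborel {0..} f" and h: "continuous_on UNIV h"
    and B: "\<And>x. 0 \<le> x \<Longrightarrow> \<bar>h x\<bar> \<le> B"
  shows "set_integrable lborel {0..} (\<lambda>x. h x * f x)"
proof (rule set_integrable_halfline_dominated)
  show "set_integrable lborel {0..} (\<lambda>x. B * \<bar>f x\<bar>)"
    using set_integrable_abs[OF f] by simp
  have "f \<in> borel_measurable (restrict_space lborel {0..})"
    using f by (simp add: set_integrable_def borel_measurable_restrict_space_iff)
  then show "(\<lambda>x. h x * f x) \<in> borel_measurable (restrict_space lborel {0..})"
    by (rule borel_measurable_times[OF borel_measurable_halfline_continuous[OF h]])
  show "\<bar>h x * f x\<bar> \<le> B * \<bar>f x\<bar>" if "0 \<le> x" for x
    using mult_right_mono[OF B[OF that] abs_ge_zero[of "f x"]] by (simp add: abs_mult)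
qed

lemma L2_halfline_bounded_mult:
  assumes "L2_halfline f" "continuous_on UNIV h" "\<And>x. 0 \<le> x \<Longrightarrow> \<bar>h x\<bar> \<le> B"
  shows "L2_halfline (\<lambda>x. h x * f x)"
  unfolding L2_halfline_iff
proof
  show "(\<lambda>x. h x * f x) \<in> borel_measurable (restrict_space lborel {0..})"
    using assms by (intro borel_measurable_times borel_measurable_halfline_continuous L2_halfline_measurable)
  have "continuous_on UNIV (\<lambda>x. (h x)\<^sup>2)" using assms(2) by (intro continuous_intros)
  moreover have "\<bar>(h x)\<^sup>2\<bar> \<le> B\<^sup>2" if "0 \<le> x" for x
    using power_mono[OF assms(3)[OF that] abs_ge_zero, of 2] by simp
  ultimately have "set_integrable lborel {0..} (\<lambda>x. (h x)\<^sup>2 * (f x)\<^sup>2)"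
    using assms(1) by (intro set_integrable_halfline_bounded_mult L2_halfline_integrable_sq)
  then show "set_integrable lborel {0..} (\<lambda>x. (h x * f x)\<^sup>2)"
    by (simp add: power_mult_distrib)
qed

lemma L2_halfline_cmult: "L2_halfline f \<Longrightarrow> L2_halfline (\<lambda>x. c * f x)"
  using L2_halfline_bounded_mult[of f "\<lambda>x. c" "\<bar>c\<bar>"] by simp

lemma L2_halfline_diff:
  assumes "L2_halfline f" "L2_halfline g"
  shows "L2_halfline (\<lambda>x. f x - g x)"
  using L2_halfline_add[OF assms(1) L2_halfline_cmult[OF assms(2), of "-1"]] by simp

lemma set_integral_nonneg:
  fixes f :: "'a \<Rightarrow> real"
  assumes "\<And>x. x \<in> A \<Longrightarrow> 0 \<le> f x"
  shows "0 \<le> (LINT x:A|M. f x)"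
  unfolding set_lebesgue_integral_def using assms by (intro integral_nonneg_AE AE_I2) (simp add: indicator_def)

lemma quadratic_nonneg_imp_discrim_le:
  fixes a b c :: real
  assumes nonneg: "\<And>t. 0 \<le> a - 2 * b * t + c * t\<^sup>2" and c: "0 \<le> c"
  shows "b\<^sup>2 \<le> a * c"
proof (cases "c = 0")
  case True
  have "b = 0"
  proof (rule ccontr)
    assume "b \<noteq> 0"
    then show False using nonneg[of "(a + 1) / (2 * b)"] True by (simp add: field_simps)
  qed
  then show ?thesis using nonneg[of 0] True by simp
next
  case False
  have "a - 2 * b * (b / c) + c * (b / c)\<^sup>2 = (a * c - b\<^sup>2) / c"
    using False by (simp add: power2_eq_square field_simps)
  then show ?thesis using nonneg[of "b / c"] c False by (simp add: zero_le_divide_iff)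
qed

lemma set_integral_Cauchy_Schwarz:
  fixes f g :: "'a \<Rightarrow> real"
  assumes "set_integrable M A (\<lambda>x. (f x)\<^sup>2)" "set_integrable M A (\<lambda>x. (g x)\<^sup>2)"
    and "set_integrable M A (\<lambda>x. f x * g x)"
  shows "(LINT x:A|M. f x * g x)\<^sup>2 \<le> (LINT x:A|M. (f x)\<^sup>2) * (LINT x:A|M. (g x)\<^sup>2)"
proof (rule quadratic_nonneg_imp_discrim_le)
  show "0 \<le> (LINT x:A|M. (f x)\<^sup>2) - 2 * (LINT x:A|M. f x * g x) * t + (LINT x:A|M. (g x)\<^sup>2) * t\<^sup>2" for t
  proof -
    have "(LINT x:A|M. (f x - t * g x)\<^sup>2) =
          (LINT x:A|M. (f x)\<^sup>2 - 2 * t * (f x * g x) + t\<^sup>2 * (g x)\<^sup>2)"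
      by (simp add: power2_eq_square algebra_simps)
    also have "\<dots> = (LINT x:A|M. (f x)\<^sup>2) - 2 * (LINT x:A|M. f x * g x) * t + (LINT x:A|M. (g x)\<^sup>2) * t\<^sup>2"
      using assms by (simp add: set_integral_add(2) set_integral_diff(2))
    moreover have "0 \<le> (LINT x:A|M. (f x - t * g x)\<^sup>2)" by (rule set_integral_nonneg) simp
    ultimately show ?thesis by simp
  qed
  show "0 \<le> (LINT x:A|M. (g x)\<^sup>2)" by (rule set_integral_nonneg) simp
qed

lemma halfline_primitive_tendsto:
  assumes F: "halfline_primitive F f" and f: "set_integrable lborel {0..} f"
  shows "(F \<longlongrightarrow> F 0 + (LINT x:{0..}|lborel. f x)) at_top"
proof -
  have "((\<lambda>X. F 0 + (LINT x:{0..X}|lborel. f x)) \<longlongrightarrow> F 0 + (LINT x:{0..}|lborel. f x)) at_top"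
    by (intro tendsto_add tendsto_const tendsto_set_lebesgue_integral_at_top f) simp
  moreover have "\<forall>\<^sub>F X in at_top. F 0 + (LINT x:{0..X}|lborel. f x) = F X"
    unfolding eventually_at_top_linorder
    by (intro exI[of _ 0] allI impI halfline_primitiveD(2)[OF F, symmetric])
  ultimately show ?thesis by (rule Lim_transform_eventually)
qed

lemma set_integral_mono_set:
  fixes f :: "real \<Rightarrow> real"
  assumes "set_integrable lborel A f" "B \<in> sets lborel" "B \<subseteq> A" "\<And>x. x \<in> A \<Longrightarrow> 0 \<le> f x"
  shows "(LINT x:B|lborel. f x) \<le> (LINT x:A|lborel. f x)"
  using set_integrable_subset[OF assms(1-3)] assms(1) unfolding set_integrable_def set_lebesgue_integral_def
proof (rule integral_mono)
  show "indicator B x *\<^sub>R f x \<le> indicator A x *\<^sub>R f x" for x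
    using assms(3) assms(4)[of x] by (auto simp: indicator_def)
qed

lemma set_integrable_halfline_tendsto_eq_0:
  fixes f :: "real \<Rightarrow> real"
  assumes f: "set_integrable lborel {0..} f" and nonneg: "\<And>x. 0 \<le> x \<Longrightarrow> 0 \<le> f x"
    and lim: "(f \<longlongrightarrow> L) at_top"
  shows "L = 0"
proof (rule ccontr)
  assume "L \<noteq> 0"
  moreover have "0 \<le> L"
    by (rule tendsto_lowerbound[OF lim]) (auto simp: eventually_at_top_linorder intro!: exI[of _ 0] nonneg)
  ultimately have L: "0 < L" by simp
  then have "\<forall>\<^sub>F x in at_top. L / 2 < f x" using order_tendstoD(1)[OF lim, of "L / 2"] by simp
  then obtain X1 where X1: "\<And>x. X1 \<le> x \<Longrightarrow> L / 2 < f x"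
    unfolding eventually_at_top_linorder by blast
  define X0 where "X0 = max X1 0"
  define J where "J = (LINT x:{0..}|lborel. f x)"
  define X where "X = X0 + 2 * (\<bar>J\<bar> + 1) / L"
  have X0: "0 \<le> X0" "X0 \<le> X" using L by (simp_all add: X0_def X_def)
  have "L / 2 * (X - X0) = (LINT x:{X0..X}|lborel. L / 2)"
    using X0 by (simp add: set_integral_const)
  also have "\<dots> \<le> (LINT x:{X0..X}|lborel. f x)"
  proof (rule set_integral_mono)
    show "set_integrable lborel {X0..X} f" by (rule set_integrable_subset[OF f]) (use X0 in auto)
    show "L / 2 \<le> f x" if "x \<in> {X0..X}" for x using X1[of x] that by (simp add: X0_def)
  qed (simp add: borel_integrable_atLeastAtMost')
  also have "\<dots> \<le> J"
    unfolding J_def by (rule set_integral_mono_set[OF f]) (use X0 nonneg in auto)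
  finally show False using L by (simp add: X_def)
qed


lemma set_integrable_exp_neg_halfline: "set_integrable lborel {0..} (\<lambda>x::real. exp (- x))"
proof -
  have "(\<lambda>x::real. exp (- 1 * x)) integrable_on {0..}"
    by (rule integrable_on_exp_minus_to_infinity) simp
  then have "(\<lambda>x::real. exp (- x)) absolutely_integrable_on {0..}"
    by (intro nonnegative_absolutely_integrable_1) auto
  moreover have "(\<lambda>x::real. indicator {0..} x *\<^sub>R exp (- x)) \<in> borel_measurable lborel"
    by measurable
  ultimately show ?thesis
    unfolding set_integrable_def using integrable_completion by blast
qed

lemma L2_halfline_exp_bound:
  assumes "continuous_on UNIV f" "\<And>x. 0 \<le> x \<Longrightarrow> (f x)\<^sup>2 \<le> C * exp (- x)"
  shows "L2_halfline f"
  unfolding L2_halfline_iff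
proof
  show f: "f \<in> borel_measurable (restrict_space lborel {0..})"
    by (rule borel_measurable_halfline_continuous[OF assms(1)])
  show "set_integrable lborel {0..} (\<lambda>x. (f x)\<^sup>2)"
    by (rule set_integrable_halfline_dominated[where g="\<lambda>x. C * exp (- x)"])
       (use set_integrable_exp_neg_halfline f assms(2) in auto)
qed

lemma set_integral_halfline_pos:
  fixes f :: "real \<Rightarrow> real"
  assumes f: "set_integrable lborel {0..} f" and pos: "\<And>x. 0 \<le> x \<Longrightarrow> 0 < f x"
  shows "0 < (LINT x:{0..}|lborel. f x)"
proof -
  have "0 \<le> (LINT x:{0..}|lborel. f x)"
    by (rule set_integral_nonneg) (simp add: pos less_imp_le)
  moreover have "(LINT x:{0..}|lborel. f x) \<noteq> 0"
  proof
    assume "(LINT x:{0..}|lborel. f x) = 0"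
    then have "AE x in lborel. indicator {0..} x *\<^sub>R f x = 0"
      using f pos unfolding set_lebesgue_integral_def set_integrable_def
      by (subst (asm) integral_nonneg_eq_0_iff_AE) (auto simp: indicator_def less_imp_le)
    then have "AE x in lborel. x \<notin> {0..1::real}"
      by eventually_elim (auto simp: indicator_def split: if_splits dest: pos)
    then have "emeasure lborel {0..1::real} = 0"
      by (subst (asm) AE_iff_measurable[of "{0..1}"]) auto
    then show False by simp
  qed
  ultimately show ?thesis by simp
qed


section \<open>The ground state\<close>

lemma phi_eq_exp: "0 < p \<Longrightarrow> phi p x = exp (- ln (cosh (p * x)) / p)"
  unfolding phi_def powr_def by (simp add: ln_div)

lemma phi_pos: "0 < p \<Longrightarrow> 0 < phi p x"
  by (simp add: phi_eq_exp)

lemma phi_0: "0 < p \<Longrightarrow> phi p 0 = 1"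
  by (simp add: phi_eq_exp)

lemma phi_powr_2p: "0 < p \<Longrightarrow> phi p x powr (2 * p) = 1 - (tanh (p * x))\<^sup>2"
proof -
  assume p: "0 < p"
  have "phi p x powr (2 * p) = exp (- ln (cosh (p * x))) ^ 2"
    using phi_pos[OF p, of x] p
    by (simp add: powr_def phi_eq_exp[OF p] flip: exp_of_nat_mult)
  also have "\<dots> = 1 / (cosh (p * x))\<^sup>2"
    by (simp add: exp_minus power_one_over inverse_eq_divide)
  also have "\<dots> = ((cosh (p * x))\<^sup>2 - (sinh (p * x))\<^sup>2) / (cosh (p * x))\<^sup>2"
    by (simp add: cosh_square_eq)
  also have "\<dots> = 1 - (tanh (p * x))\<^sup>2"
    using cosh_real_pos[of "p * x"] by (simp add: tanh_def power_divide diff_divide_distrib del: cosh_real_pos)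
  finally show ?thesis .
qed

lemma phi_has_real_derivative:
  "0 < p \<Longrightarrow> (phi p has_real_derivative - (tanh (p * x) * phi p x)) (at x)"
proof -
  assume p: "0 < p"
  have "phi p = (\<lambda>x. exp (- ln (cosh (p * x)) / p))"
    using phi_eq_exp[OF p] by auto
  moreover have "((\<lambda>x. exp (- ln (cosh (p * x)) / p)) has_real_derivative
      exp (- ln (cosh (p * x)) / p) * (- (sinh (p * x) * p / cosh (p * x)) / p)) (at x)"
    by (auto intro!: derivative_eq_intros)
  ultimately show ?thesis
    using p by (simp add: phi_eq_exp tanh_def ac_simps)
qed

lemma continuous_on_phi: "0 < p \<Longrightarrow> continuous_on UNIV (phi p)"
  using DERIV_isCont[OF phi_has_real_derivative] by (simp add: continuous_at_imp_continuous_on)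

lemma continuous_on_tanh_mult: "continuous_on UNIV (\<lambda>x::real. tanh (p * x))"
  by (intro continuous_intros) (metis cosh_real_pos less_irrefl)

lemma abs_tanh_le_1: "\<bar>tanh (x::real)\<bar> \<le> 1"
  using tanh_real_bounds[of x] by auto

lemma phi_le_exp: "0 < p \<Longrightarrow> 0 \<le> x \<Longrightarrow> phi p x \<le> exp (ln 2 / p) * exp (- x)"
proof -
  assume p: "0 < p" and x: "0 \<le> x"
  have "exp (p * x) / 2 \<le> cosh (p * x)" unfolding cosh_def by simp
  then have "p * x - ln 2 \<le> ln (cosh (p * x))"
    using ln_mono[of "exp (p * x) / 2"] by (simp add: ln_div)
  then have "- ln (cosh (p * x)) / p \<le> ln 2 / p + - x"
    using p by (simp add: field_simps)
  then show ?thesis by (simp add: phi_eq_exp[OF p] flip: exp_add)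
qed

lemma dPhi_eq: "0 < p \<Longrightarrow> dPhi p x = phi p x / (2 * p) - x * tanh (p * x) * phi p x / 2"
proof -
  assume p: "0 < p"
  have "((\<lambda>\<omega>. \<omega> powr (1 / (2 * p)) * phi p (sqrt \<omega> * x)) has_real_derivative
      1 / (2 * p) * 1 powr (1 / (2 * p) - 1) * phi p (sqrt 1 * x) +
      - (tanh (p * (sqrt 1 * x)) * phi p (sqrt 1 * x)) * (inverse (sqrt 1) / 2 * x) * 1 powr (1 / (2 * p))) (at 1)"
    by (intro DERIV_mult has_real_derivative_powr DERIV_chain2[OF phi_has_real_derivative[OF p]]
        DERIV_cmult_right DERIV_real_sqrt) simp_all
  then have "((\<lambda>\<omega>. Phi_omega p \<omega> x) has_real_derivative phi p x / (2 * p) - x * tanh (p * x) * phi p x / 2) (at 1)"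
    unfolding Phi_omega_def by (simp add: field_simps)
  then show ?thesis unfolding dPhi_def by (rule DERIV_imp_deriv)
qed

lemma L2_halfline_phi: "0 < p \<Longrightarrow> L2_halfline (phi p)"
proof (rule L2_halfline_exp_bound[OF continuous_on_phi])
  fix x :: real assume "0 < p" "0 \<le> x"
  have "(phi p x)\<^sup>2 \<le> (exp (ln 2 / p) * exp (- x))\<^sup>2"
    using phi_le_exp[OF \<open>0 < p\<close> \<open>0 \<le> x\<close>] phi_pos[OF \<open>0 < p\<close>, of x] by (intro power_mono) auto
  also have "\<dots> \<le> (exp (ln 2 / p))\<^sup>2 * exp (- x)"
    using \<open>0 \<le> x\<close> by (simp add: power2_eq_square)
  finally show "(phi p x)\<^sup>2 \<le> (exp (ln 2 / p))\<^sup>2 * exp (- x)" .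
qed

lemma L2_halfline_x_tanh_phi: "0 < p \<Longrightarrow> L2_halfline (\<lambda>x. x * tanh (p * x) * phi p x)"
proof (rule L2_halfline_exp_bound)
  assume p: "0 < p"
  show "continuous_on UNIV (\<lambda>x. x * tanh (p * x) * phi p x)"
    by (intro continuous_intros continuous_on_tanh_mult continuous_on_phi p)
  fix x :: real assume x: "0 \<le> x"
  have "x\<^sup>2 \<le> 2 * exp x"
    using exp_lower_Taylor_quadratic[OF x] x by simp
  then have "x\<^sup>2 * exp (- x) \<le> 2"
    by (simp add: exp_minus field_simps)
  moreover have "(tanh (p * x))\<^sup>2 \<le> 1"
    using abs_tanh_le_1[of "p * x"] by (simp add: abs_square_le_1)
  moreover have "(phi p x)\<^sup>2 \<le> (exp (ln 2 / p) * exp (- x))\<^sup>2"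
    using phi_le_exp[OF p x] phi_pos[OF p, of x] by (intro power_mono) auto
  ultimately have "x\<^sup>2 * (tanh (p * x))\<^sup>2 * (phi p x)\<^sup>2 \<le> x\<^sup>2 * 1 * ((exp (ln 2 / p))\<^sup>2 * (exp (- x) * exp (- x)))"
    by (intro mult_mono) (auto simp: power_mult_distrib power2_eq_square mult_ac)
  also have "\<dots> = (exp (ln 2 / p))\<^sup>2 * (x\<^sup>2 * exp (- x)) * exp (- x)"
    by simp
  also have "\<dots> \<le> (exp (ln 2 / p))\<^sup>2 * 2 * exp (- x)"
    using \<open>x\<^sup>2 * exp (- x) \<le> 2\<close> by (intro mult_right_mono mult_left_mono) auto
  finally show "(x * tanh (p * x) * phi p x)\<^sup>2 \<le> 2 * (exp (ln 2 / p))\<^sup>2 * exp (- x)"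
    by (simp add: power_mult_distrib ac_simps)
qed

lemma dPhi_eq_fun: "0 < p \<Longrightarrow> dPhi p = (\<lambda>x. 1 / (2 * p) * phi p x - 1 / 2 * (x * tanh (p * x) * phi p x))"
  by (simp add: dPhi_eq fun_eq_iff)

lemma L2_halfline_dPhi: "0 < p \<Longrightarrow> L2_halfline (dPhi p)"
  unfolding dPhi_eq_fun by (intro L2_halfline_diff L2_halfline_cmult L2_halfline_phi L2_halfline_x_tanh_phi)

lemma integral_phi_sq_pos:
  assumes "0 < p"
  shows "0 < (LINT x:{0..}|lborel. (phi p x)\<^sup>2)"
proof (rule set_integral_halfline_pos)
  show "set_integrable lborel {0..} (\<lambda>x. (phi p x)\<^sup>2)"
    by (intro L2_halfline_integrable_sq L2_halfline_phi assms)
  show "0 < (phi p x)\<^sup>2" for x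
    using phi_pos[OF assms, of x] by simp
qed

lemma integral_phi_dPhi:
  assumes p: "0 < p"
  shows "(LINT x:{0..}|lborel. phi p x * dPhi p x) = (1 / (2 * p) - 1 / 4) * (LINT x:{0..}|lborel. (phi p x)\<^sup>2)"
proof -
  define A where "A = (LINT x:{0..}|lborel. (phi p x)\<^sup>2)"
  define B where "B = (LINT x:{0..}|lborel. (x * tanh (p * x) * phi p x) * phi p x)"
  have iA: "set_integrable lborel {0..} (\<lambda>x. (phi p x)\<^sup>2)"
    by (intro L2_halfline_integrable_sq L2_halfline_phi p)
  have iB: "set_integrable lborel {0..} (\<lambda>x. (x * tanh (p * x) * phi p x) * phi p x)"
    by (intro L2_halfline_integrable_mult L2_halfline_x_tanh_phi L2_halfline_phi p)
  define f where "f x = (phi p x)\<^sup>2 - 2 * ((x * tanh (p * x) * phi p x) * phi p x)" for x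
  have "halfline_primitive (\<lambda>x. x * (phi p x)\<^sup>2) f"
  proof (rule halfline_primitive_of_deriv)
    show "((\<lambda>x. x * (phi p x)\<^sup>2) has_real_derivative f x) (at x)" for x
      unfolding f_def
      by (auto intro!: derivative_eq_intros phi_has_real_derivative[OF p] simp: power2_eq_square algebra_simps)
    show "isCont f x" for x
      unfolding f_def using continuous_on_phi[OF p] continuous_on_tanh_mult[of p]
      by (intro continuous_intros) (simp_all add: continuous_on_eq_continuous_at)
  qed
  moreover have "set_integrable lborel {0..} f"
    unfolding f_def using iA iB by simp
  ultimately have "((\<lambda>x. x * (phi p x)\<^sup>2) \<longlongrightarrow> (LINT x:{0..}|lborel. f x)) at_top"
    using halfline_primitive_tendsto by fastforce
  moreover have "((\<lambda>x. x * (phi p x)\<^sup>2) \<longlongrightarrow> 0) at_top"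
    using p unfolding phi_def by real_asymp
  ultimately have "(LINT x:{0..}|lborel. f x) = 0" by (rule tendsto_unique[rotated]) simp
  then have "B = A / 2"
    using iA iB unfolding f_def A_def B_def by (simp add: set_integral_diff(2))
  have "(LINT x:{0..}|lborel. phi p x * dPhi p x) =
     (LINT x:{0..}|lborel. 1 / (2 * p) * (phi p x)\<^sup>2 - 1 / 2 * ((x * tanh (p * x) * phi p x) * phi p x))"
    by (simp add: dPhi_eq_fun[OF p] power2_eq_square algebra_simps)
  also have "\<dots> = 1 / (2 * p) * A - 1 / 2 * B"
    unfolding A_def B_def using iA iB by (simp add: set_integral_diff(2))
  finally show ?thesis using \<open>B = A / 2\<close> unfolding A_def by (simp add: algebra_simps)
qed


section \<open>Factorization of the quadratic form\<close>

(* The operator A = d/dx + tanh(px) of the factorization L_- = A^* A, applied to w with derivative w'. *)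
definition Aop :: "real \<Rightarrow> (real \<Rightarrow> real) \<Rightarrow> (real \<Rightarrow> real) \<Rightarrow> real \<Rightarrow> real" where
  "Aop p w w' x = w' x + tanh (p * x) * w x"

lemma L2_halfline_tanh_mult: "L2_halfline w \<Longrightarrow> L2_halfline (\<lambda>x. tanh (p * x) * w x)"
  by (rule L2_halfline_bounded_mult[OF _ continuous_on_tanh_mult abs_tanh_le_1])

lemma L2_halfline_Aop:
  "H1_halfline_deriv w w' \<Longrightarrow> L2_halfline (Aop p w w')"
  unfolding Aop_def H1_halfline_deriv_def by (intro L2_halfline_add L2_halfline_tanh_mult) auto

lemma halfline_primitive_tanh_mult:
  "halfline_primitive (\<lambda>x. tanh (p * x)) (\<lambda>x. p * (1 - (tanh (p * x))\<^sup>2))"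
proof (rule halfline_primitive_of_deriv)
  have "cosh (p * x) \<noteq> 0" for x using cosh_real_pos[of "p * x"] by linarith
  then show "((\<lambda>x. tanh (p * x)) has_real_derivative p * (1 - (tanh (p * x))\<^sup>2)) (at x)" for x
    by (auto intro!: derivative_eq_intros)
  show "isCont (\<lambda>x. p * (1 - (tanh (p * x))\<^sup>2)) x" for x
    using continuous_on_tanh_mult[of p] by (intro continuous_intros) (simp add: continuous_on_eq_continuous_at)
qed

lemma Lminus_edge_eq_Aop_sq:
  assumes p: "0 < p" and H: "H1_halfline_deriv w w'"
  shows "(LINT x:{0..}|lborel. (w' x)\<^sup>2 + (w x)\<^sup>2 - (p + 1) * phi p x powr (2 * p) * (w x)\<^sup>2) =
         (LINT x:{0..}|lborel. (Aop p w w' x)\<^sup>2)"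
proof -
  have Lw: "L2_halfline w" and Lw': "L2_halfline w'" using H by (simp_all add: H1_halfline_deriv_def)
  have iw: "set_integrable lborel {0..} (\<lambda>x. (w x)\<^sup>2)" by (rule L2_halfline_integrable_sq[OF Lw])
  define Q where "Q x = (w' x)\<^sup>2 + (w x)\<^sup>2 - (p + 1) * ((1 - (tanh (p * x))\<^sup>2) * (w x)\<^sup>2)" for x
  define h where "h x = p * ((1 - (tanh (p * x))\<^sup>2) * (w x)\<^sup>2) + 2 * (tanh (p * x) * w x * w' x)" for x
  have "\<bar>1 - (tanh y)\<^sup>2\<bar> \<le> 1" for y :: real
    using abs_tanh_le_1[of y] by (simp add: abs_square_le_1)
  then have sech_w: "set_integrable lborel {0..} (\<lambda>x. (1 - (tanh (p * x))\<^sup>2) * (w x)\<^sup>2)"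
    by (intro set_integrable_halfline_bounded_mult[OF iw, where B=1] continuous_intros continuous_on_tanh_mult)
  have iQ: "set_integrable lborel {0..} Q"
    unfolding Q_def using sech_w iw L2_halfline_integrable_sq[OF Lw'] by simp
  have ih: "set_integrable lborel {0..} h"
    unfolding h_def using sech_w L2_halfline_integrable_mult[OF L2_halfline_tanh_mult[OF Lw] Lw'] by simp
  (* h integrates to 0: it is the derivative of tanh(px) w(x)^2, and w(x)^2 tends to 0 *)
  have "halfline_primitive (\<lambda>x. tanh (p * x) * (w x * w x)) h"
    unfolding h_def[abs_def]
    using halfline_primitive_mult[OF halfline_primitive_tanh_mult[of p]
        halfline_primitive_mult[OF H1_halfline_deriv_primitive[OF H] H1_halfline_deriv_primitive[OF H]]]
    by (simp add: power2_eq_square algebra_simps)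
  then have "((\<lambda>x. tanh (p * x) * (w x * w x)) \<longlongrightarrow> (LINT x:{0..}|lborel. h x)) at_top"
    using halfline_primitive_tendsto[OF _ ih] by fastforce
  moreover have "((\<lambda>x. tanh (p * x)) \<longlongrightarrow> 1) at_top"
    using p by real_asymp
  ultimately have "((\<lambda>x. tanh (p * x) * (w x * w x) / tanh (p * x)) \<longlongrightarrow> (LINT x:{0..}|lborel. h x) / 1) at_top"
    by (intro tendsto_divide) auto
  moreover have "\<forall>\<^sub>F x in at_top. tanh (p * x) * (w x * w x) / tanh (p * x) = (w x)\<^sup>2"
    unfolding eventually_at_top_linorder using p by (intro exI[of _ 1] allI impI) (simp add: power2_eq_square)
  ultimately have "((\<lambda>x. (w x)\<^sup>2) \<longlongrightarrow> (LINT x:{0..}|lborel. h x)) at_top"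
    by (simp add: tendsto_cong)
  then have "(LINT x:{0..}|lborel. h x) = 0"
    by (rule set_integrable_halfline_tendsto_eq_0[OF iw, rotated]) simp
  moreover have "(LINT x:{0..}|lborel. (Aop p w w' x)\<^sup>2) = (LINT x:{0..}|lborel. Q x + h x)"
    by (simp add: Aop_def Q_def h_def power2_eq_square algebra_simps)
  ultimately have "(LINT x:{0..}|lborel. (Aop p w w' x)\<^sup>2) = (LINT x:{0..}|lborel. Q x)"
    using iQ ih by (simp add: set_integral_add(2))
  then show ?thesis by (simp add: Q_def phi_powr_2p[OF p] mult.assoc)
qed


section \<open>The equation r' + tanh(px) r = u\<close>

lemma halfline_ODE_energy_identity:
  assumes r: "halfline_primitive r k" and r0: "r 0 = 0"
    and k: "\<And>x. 0 \<le> x \<Longrightarrow> k x = u x - tanh (p * x) * r x"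
    and Lr: "L2_halfline r" and Lu: "L2_halfline u" and X: "0 \<le> X"
  shows "(r X)\<^sup>2 + (LINT y:{0..X}|lborel. 2 * (tanh (p * y) * (r y)\<^sup>2)) =
         (LINT y:{0..X}|lborel. 2 * (r y * u y))"
proof -
  have "set_integrable lborel {0..} (\<lambda>y. tanh (p * y) * (r y)\<^sup>2)"
    by (rule set_integrable_halfline_bounded_mult[OF L2_halfline_integrable_sq[OF Lr]
          continuous_on_tanh_mult abs_tanh_le_1])
  then have "set_integrable lborel {0..X} (\<lambda>y. tanh (p * y) * (r y)\<^sup>2)"
    by (rule set_integrable_subset) auto
  then have i1: "set_integrable lborel {0..X} (\<lambda>y. 2 * (tanh (p * y) * (r y)\<^sup>2))"
    by simp
  have "set_integrable lborel {0..X} (\<lambda>y. r y * u y)"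
    by (rule set_integrable_subset[OF L2_halfline_integrable_mult[OF Lr Lu]]) auto
  then have i2: "set_integrable lborel {0..X} (\<lambda>y. 2 * (r y * u y))"
    by simp
  have "r X * r X = r 0 * r 0 + (LINT y:{0..X}|lborel. k y * r y + r y * k y)"
    by (rule halfline_primitiveD(2)[OF halfline_primitive_mult[OF r r] X])
  also have "(LINT y:{0..X}|lborel. k y * r y + r y * k y) =
             (LINT y:{0..X}|lborel. 2 * (r y * u y) - 2 * (tanh (p * y) * (r y)\<^sup>2))"
    by (rule set_lebesgue_integral_cong) (auto simp: k power2_eq_square algebra_simps)
  also have "\<dots> = (LINT y:{0..X}|lborel. 2 * (r y * u y)) - (LINT y:{0..X}|lborel. 2 * (tanh (p * y) * (r y)\<^sup>2))"
    by (rule set_integral_diff(2)[OF i2 i1])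
  finally show ?thesis using r0 by (simp add: power2_eq_square)
qed

lemma halfline_ODE_bounds:
  assumes p: "0 < p" and r: "halfline_primitive r k" and r0: "r 0 = 0"
    and k: "\<And>x. 0 \<le> x \<Longrightarrow> k x = u x - tanh (p * x) * r x"
    and Lr: "L2_halfline r" and Lu: "L2_halfline u"
  defines "B \<equiv> LINT y:{0..}|lborel. 2 * \<bar>r y * u y\<bar>"
  shows "\<And>X. 0 \<le> X \<Longrightarrow> (r X)\<^sup>2 \<le> B"
    and "(LINT y:{0..}|lborel. 2 * (tanh (p * y) * (r y)\<^sup>2)) \<le> B"
proof -
  have iru: "set_integrable lborel {0..} (\<lambda>y. 2 * \<bar>r y * u y\<bar>)"
    using set_integrable_abs[OF L2_halfline_integrable_mult[OF Lr Lu]] by simp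
  have bound: "(r X)\<^sup>2 \<le> B \<and> (LINT y:{0..X}|lborel. 2 * (tanh (p * y) * (r y)\<^sup>2)) \<le> B"
    if X: "0 \<le> X" for X
  proof -
    have "set_integrable lborel {0..X} (\<lambda>y. r y * u y)"
      by (rule set_integrable_subset[OF L2_halfline_integrable_mult[OF Lr Lu]]) auto
    moreover have "set_integrable lborel {0..X} (\<lambda>y. 2 * \<bar>r y * u y\<bar>)"
      by (rule set_integrable_subset[OF iru]) auto
    ultimately have "(LINT y:{0..X}|lborel. 2 * (r y * u y)) \<le> (LINT y:{0..X}|lborel. 2 * \<bar>r y * u y\<bar>)"
      by (intro set_integral_mono) auto
    also have "\<dots> \<le> B"
      unfolding B_def by (rule set_integral_mono_set[OF iru]) auto
    finally have "(LINT y:{0..X}|lborel. 2 * (r y * u y)) \<le> B" .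
    moreover have "0 \<le> (LINT y:{0..X}|lborel. 2 * (tanh (p * y) * (r y)\<^sup>2))"
      using p by (intro set_integral_nonneg) auto
    ultimately show ?thesis
      using halfline_ODE_energy_identity[OF r r0 k Lr Lu X] zero_le_power2[of "r X"] by linarith
  qed
  then show "\<And>X. 0 \<le> X \<Longrightarrow> (r X)\<^sup>2 \<le> B" by blast
  have "set_integrable lborel {0..} (\<lambda>y. tanh (p * y) * (r y)\<^sup>2)"
    by (rule set_integrable_halfline_bounded_mult[OF L2_halfline_integrable_sq[OF Lr]
          continuous_on_tanh_mult abs_tanh_le_1])
  then have "set_integrable lborel {0..} (\<lambda>y. 2 * (tanh (p * y) * (r y)\<^sup>2))"
    by simp
  then show "(LINT y:{0..}|lborel. 2 * (tanh (p * y) * (r y)\<^sup>2)) \<le> B"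
    using bound
    by (intro tendsto_upperbound[OF tendsto_set_lebesgue_integral_at_top])
       (auto simp: eventually_at_top_linorder intro!: exI[of _ 0])
qed

lemma halfline_ODE_L2_bound:
  assumes p: "0 < p" and r: "halfline_primitive r k" and r0: "r 0 = 0"
    and k: "\<And>x. 0 \<le> x \<Longrightarrow> k x = u x - tanh (p * x) * r x"
    and Lr: "L2_halfline r" and Lu: "L2_halfline u"
  shows "(LINT y:{0..}|lborel. (r y)\<^sup>2) \<le>
         (1 / p + 1 / (2 * tanh 1)) * (LINT y:{0..}|lborel. 2 * \<bar>r y * u y\<bar>)"
proof -
  define B where "B = (LINT y:{0..}|lborel. 2 * \<bar>r y * u y\<bar>)"
  note bound = halfline_ODE_bounds[OF assms, folded B_def]
  have ir: "set_integrable lborel {0..} (\<lambda>y. (r y)\<^sup>2)" by (rule L2_halfline_integrable_sq[OF Lr])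
  have itr: "set_integrable lborel {0..} (\<lambda>y. 2 * (tanh (p * y) * (r y)\<^sup>2) / (2 * tanh 1))"
    using set_integrable_halfline_bounded_mult[OF ir continuous_on_tanh_mult abs_tanh_le_1] by simp
  have "0 \<le> 1 / p" using p by simp
  then have "{0..1 / p} \<union> {1 / p..} = {0..}" and sub: "{1 / p..} \<subseteq> {0..}"
    by (auto intro: order_trans[OF \<open>0 \<le> 1 / p\<close>])
  then have "(LINT y:{0..}|lborel. (r y)\<^sup>2) = (LINT y:{0..1 / p}|lborel. (r y)\<^sup>2) + (LINT y:{1 / p..}|lborel. (r y)\<^sup>2)"
    using set_integral_Un_point[of "{0..1 / p}" "{1 / p..}" _ "1 / p"] ir by auto
  also have "(LINT y:{0..1 / p}|lborel. (r y)\<^sup>2) \<le> (LINT y:{0..1 / p}|lborel. B)"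
    by (intro set_integral_mono set_integrable_subset[OF ir] borel_integrable_atLeastAtMost')
       (auto intro: bound(1))
  also have "\<dots> = B / p" using p by (subst set_integral_const) auto
  also have "(LINT y:{1 / p..}|lborel. (r y)\<^sup>2) \<le> (LINT y:{1 / p..}|lborel. 2 * (tanh (p * y) * (r y)\<^sup>2) / (2 * tanh 1))"
  proof (intro set_integral_mono set_integrable_subset[OF ir] set_integrable_subset[OF itr])
    fix y assume "y \<in> {1 / p..}"
    then have "tanh 1 \<le> tanh (p * y)" using p by (simp add: field_simps)
    then have "tanh 1 * (r y)\<^sup>2 \<le> tanh (p * y) * (r y)\<^sup>2" by (rule mult_right_mono) simp
    then show "(r y)\<^sup>2 \<le> 2 * (tanh (p * y) * (r y)\<^sup>2) / (2 * tanh 1)" by (simp add: field_simps)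
  qed (use p in auto)
  also have "\<dots> \<le> (LINT y:{0..}|lborel. 2 * (tanh (p * y) * (r y)\<^sup>2) / (2 * tanh 1))"
    using p by (intro set_integral_mono_set[OF itr _ sub]) auto
  also have "\<dots> \<le> B / (2 * tanh 1)"
    using divide_right_mono[OF bound(2), of "2 * tanh 1"] by simp
  finally show ?thesis unfolding B_def[symmetric] by (simp add: distrib_right)
qed

lemma halfline_ODE_L2_estimate:
  assumes p: "0 < p" and r: "halfline_primitive r k" and r0: "r 0 = 0"
    and k: "\<And>x. 0 \<le> x \<Longrightarrow> k x = u x - tanh (p * x) * r x"
    and Lr: "L2_halfline r" and Lu: "L2_halfline u"
  shows "(LINT y:{0..}|lborel. (r y)\<^sup>2) \<le>
         4 * (1 / p + 1 / (2 * tanh 1))\<^sup>2 * (LINT y:{0..}|lborel. (u y)\<^sup>2)"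
proof -
  define M where "M = 1 / p + 1 / (2 * tanh 1)"
  define R where "R = (LINT y:{0..}|lborel. (r y)\<^sup>2)"
  define U where "U = (LINT y:{0..}|lborel. (u y)\<^sup>2)"
  define S where "S = (LINT y:{0..}|lborel. \<bar>r y\<bar> * \<bar>u y\<bar>)"
  have "(LINT y:{0..}|lborel. 2 * \<bar>r y * u y\<bar>) = 2 * S" by (simp add: S_def abs_mult)
  then have R: "R \<le> M * (2 * S)"
    using halfline_ODE_L2_bound[OF assms] unfolding R_def M_def by simp
  have "S\<^sup>2 \<le> R * U"
    unfolding S_def R_def U_def
    using set_integral_Cauchy_Schwarz[of lborel "{0..}" "\<lambda>y. \<bar>r y\<bar>" "\<lambda>y. \<bar>u y\<bar>"]
      L2_halfline_integrable_sq[OF Lr] L2_halfline_integrable_sq[OF Lu]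
      set_integrable_abs[OF L2_halfline_integrable_mult[OF Lr Lu]]
    by (simp add: abs_mult)
  have "0 \<le> R" unfolding R_def by (rule set_integral_nonneg) simp
  have "R * R \<le> (M * (2 * S)) * (M * (2 * S))"
    using R \<open>0 \<le> R\<close> by (intro mult_mono) auto
  also have "\<dots> = 4 * M\<^sup>2 * S\<^sup>2" by (simp add: power2_eq_square)
  also have "\<dots> \<le> 4 * M\<^sup>2 * (R * U)" by (rule mult_left_mono[OF \<open>S\<^sup>2 \<le> R * U\<close>]) simp
  finally have "R * R \<le> R * (4 * M\<^sup>2 * U)" by (simp add: algebra_simps)
  moreover have "0 \<le> U" unfolding U_def by (rule set_integral_nonneg) simp
  ultimately have "R \<le> 4 * M\<^sup>2 * U"
    using \<open>0 \<le> R\<close> by (cases "R = 0") (auto simp: mult_le_cancel_left)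
  then show ?thesis by (simp add: R_def U_def M_def)
qed


section \<open>Estimates on a single edge\<close>

lemma halfline_primitive_phi:
  "0 < p \<Longrightarrow> halfline_primitive (phi p) (\<lambda>x. - (tanh (p * x) * phi p x))"
  using continuous_on_phi continuous_on_tanh_mult
  by (intro halfline_primitive_of_deriv phi_has_real_derivative)
     (auto intro!: continuous_intros simp: continuous_on_eq_continuous_at)

lemma L2_halfline_edge_remainder:
  "0 < p \<Longrightarrow> H1_halfline_deriv w w' \<Longrightarrow> L2_halfline (\<lambda>x. w x - w 0 * phi p x)"
  unfolding H1_halfline_deriv_def by (intro L2_halfline_diff L2_halfline_cmult L2_halfline_phi) auto

lemma edge_remainder_estimate:
  assumes p: "0 < p" and H: "H1_halfline_deriv w w'"
  shows "(LINT x:{0..}|lborel. (w x - w 0 * phi p x)\<^sup>2) \<le>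
         4 * (1 / p + 1 / (2 * tanh 1))\<^sup>2 * (LINT x:{0..}|lborel. (Aop p w w' x)\<^sup>2)"
proof (rule halfline_ODE_L2_estimate[OF p])
  show "halfline_primitive (\<lambda>x. w x - w 0 * phi p x) (\<lambda>x. w' x - w 0 * - (tanh (p * x) * phi p x))"
    by (intro halfline_primitive_diff halfline_primitive_cmult H1_halfline_deriv_primitive[OF H]
        halfline_primitive_phi[OF p])
  show "w' x - w 0 * - (tanh (p * x) * phi p x) = Aop p w w' x - tanh (p * x) * (w x - w 0 * phi p x)" for x
    by (simp add: Aop_def algebra_simps)
  show "L2_halfline (\<lambda>x. w x - w 0 * phi p x)" by (rule L2_halfline_edge_remainder[OF p H])
  show "L2_halfline (Aop p w w')" by (rule L2_halfline_Aop[OF H])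
qed (simp add: phi_0[OF p])

lemma sq_add_le: "(a + b)\<^sup>2 \<le> 2 * a\<^sup>2 + 2 * (b::real)\<^sup>2"
  using zero_le_power2[of "a - b"] by (simp add: power2_eq_square algebra_simps)

lemma edge_H1_norm_estimate:
  assumes p: "0 < p" and H: "H1_halfline_deriv w w'"
  shows "(LINT x:{0..}|lborel. (w' x)\<^sup>2 + (w x)\<^sup>2) \<le>
         2 * (LINT x:{0..}|lborel. (Aop p w w' x)\<^sup>2) + 6 * (w 0)\<^sup>2 * (LINT x:{0..}|lborel. (phi p x)\<^sup>2)
         + 6 * (LINT x:{0..}|lborel. (w x - w 0 * phi p x)\<^sup>2)"
proof -
  define r where "r x = w x - w 0 * phi p x" for x
  have iw: "set_integrable lborel {0..} (\<lambda>x. (w x)\<^sup>2)" "set_integrable lborel {0..} (\<lambda>x. (w' x)\<^sup>2)"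
    using H by (simp_all add: H1_halfline_deriv_def L2_halfline_integrable_sq)
  have iA: "set_integrable lborel {0..} (\<lambda>x. (Aop p w w' x)\<^sup>2)"
    by (rule L2_halfline_integrable_sq[OF L2_halfline_Aop[OF H]])
  have iphi: "set_integrable lborel {0..} (\<lambda>x. (phi p x)\<^sup>2)"
    by (rule L2_halfline_integrable_sq[OF L2_halfline_phi[OF p]])
  have ir: "set_integrable lborel {0..} (\<lambda>x. (r x)\<^sup>2)"
    unfolding r_def by (rule L2_halfline_integrable_sq[OF L2_halfline_edge_remainder[OF p H]])
  have pointwise: "(w' x)\<^sup>2 + (w x)\<^sup>2 \<le> 2 * (Aop p w w' x)\<^sup>2 + 6 * (w 0)\<^sup>2 * (phi p x)\<^sup>2 + 6 * (r x)\<^sup>2" for x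
  proof -
    have "(- tanh (p * x) * w x)\<^sup>2 \<le> (w x)\<^sup>2"
      using abs_tanh_le_1[of "p * x"]
      by (simp add: power_mult_distrib abs_square_le_1 mult_left_le_one_le)
    then have "(w' x)\<^sup>2 \<le> 2 * (Aop p w w' x)\<^sup>2 + 2 * (w x)\<^sup>2"
      using sq_add_le[of "Aop p w w' x" "- tanh (p * x) * w x"] by (simp add: Aop_def)
    moreover have "(w x)\<^sup>2 \<le> 2 * (w 0)\<^sup>2 * (phi p x)\<^sup>2 + 2 * (r x)\<^sup>2"
      using sq_add_le[of "w 0 * phi p x" "r x"] by (simp add: r_def power_mult_distrib)
    ultimately show ?thesis by linarith
  qed
  have "(LINT x:{0..}|lborel. (w' x)\<^sup>2 + (w x)\<^sup>2) \<le>
      (LINT x:{0..}|lborel. 2 * (Aop p w w' x)\<^sup>2 + 6 * (w 0)\<^sup>2 * (phi p x)\<^sup>2 + 6 * (r x)\<^sup>2)"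
    by (rule set_integral_mono[OF set_integral_add(1)[OF iw(2) iw(1)]])
       (use iA iphi ir pointwise in simp_all)
  also have "\<dots> = 2 * (LINT x:{0..}|lborel. (Aop p w w' x)\<^sup>2) + 6 * (w 0)\<^sup>2 * (LINT x:{0..}|lborel. (phi p x)\<^sup>2)
      + 6 * (LINT x:{0..}|lborel. (r x)\<^sup>2)"
    using iA iphi ir by (simp add: set_integral_add(2))
  finally show ?thesis by (simp add: r_def)
qed

lemma edge_dPhi_decomposition:
  assumes p: "0 < p" and H: "H1_halfline_deriv w w'"
  shows "(LINT x:{0..}|lborel. w x * dPhi p x) =
         w 0 * (LINT x:{0..}|lborel. phi p x * dPhi p x) + (LINT x:{0..}|lborel. (w x - w 0 * phi p x) * dPhi p x)"
    and "(LINT x:{0..}|lborel. (w x - w 0 * phi p x) * dPhi p x)\<^sup>2 \<le>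
         (LINT x:{0..}|lborel. (w x - w 0 * phi p x)\<^sup>2) * (LINT x:{0..}|lborel. (dPhi p x)\<^sup>2)"
proof -
  note Lr = L2_halfline_edge_remainder[OF p H] and Ld = L2_halfline_dPhi[OF p]
  have "(LINT x:{0..}|lborel. w x * dPhi p x) =
        (LINT x:{0..}|lborel. w 0 * (phi p x * dPhi p x) + (w x - w 0 * phi p x) * dPhi p x)"
    by (simp add: algebra_simps)
  then show "(LINT x:{0..}|lborel. w x * dPhi p x) =
         w 0 * (LINT x:{0..}|lborel. phi p x * dPhi p x) + (LINT x:{0..}|lborel. (w x - w 0 * phi p x) * dPhi p x)"
    using L2_halfline_integrable_mult[OF L2_halfline_phi[OF p] Ld] L2_halfline_integrable_mult[OF Lr Ld]
    by (simp add: set_integral_add(2))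
  show "(LINT x:{0..}|lborel. (w x - w 0 * phi p x) * dPhi p x)\<^sup>2 \<le>
         (LINT x:{0..}|lborel. (w x - w 0 * phi p x)\<^sup>2) * (LINT x:{0..}|lborel. (dPhi p x)\<^sup>2)"
    by (intro set_integral_Cauchy_Schwarz L2_halfline_integrable_sq L2_halfline_integrable_mult Lr Ld)
qed


section \<open>Summing over the edges\<close>

lemma star_sum_estimate:
  fixes U R S H :: "nat \<Rightarrow> real"
  assumes N: "0 < N" and \<alpha>: "\<alpha> \<noteq> 0" and A: "0 \<le> A" and P: "0 \<le> P"
    and orth: "(\<Sum>j<N. c * \<alpha> + S j) = 0"
    and RU: "\<And>j. j < N \<Longrightarrow> R j \<le> K * U j"
    and SR: "\<And>j. j < N \<Longrightarrow> (S j)\<^sup>2 \<le> R j * P"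
    and HU: "\<And>j. j < N \<Longrightarrow> H j \<le> 2 * U j + 6 * c\<^sup>2 * A + 6 * R j"
  shows "(\<Sum>j<N. H j) \<le> (2 + 6 * K * (1 + A * P / \<alpha>\<^sup>2)) * (\<Sum>j<N. U j)"
proof -
  have "(\<Sum>j<N. S j) = - (real N * c * \<alpha>)"
    using orth by (simp add: sum.distrib algebra_simps)
  then have "(real N * c * \<alpha>)\<^sup>2 = (\<Sum>j<N. 1 * S j)\<^sup>2"
    by simp
  also have "\<dots> \<le> real N * (\<Sum>j<N. (S j)\<^sup>2)"
    using Cauchy_Schwarz_ineq_sum[of "\<lambda>_. 1" S "{..<N}"] by simp
  also have "\<dots> \<le> real N * (P * (\<Sum>j<N. R j))"
    using SR by (intro mult_left_mono) (auto simp: sum_distrib_left mult.commute intro: sum_mono)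
  finally have "real N * (real N * c\<^sup>2 * \<alpha>\<^sup>2) \<le> real N * (P * (\<Sum>j<N. R j))"
    by (simp add: power_mult_distrib power2_eq_square mult_ac)
  then have "real N * c\<^sup>2 * \<alpha>\<^sup>2 \<le> P * (\<Sum>j<N. R j)"
    using N by simp
  then have "real N * c\<^sup>2 \<le> P * (\<Sum>j<N. R j) / \<alpha>\<^sup>2"
    using \<alpha> by (simp add: pos_le_divide_eq)
  have "(\<Sum>j<N. H j) \<le> (\<Sum>j<N. 2 * U j + 6 * c\<^sup>2 * A + 6 * R j)"
    using HU by (intro sum_mono) simp
  also have "\<dots> = 2 * (\<Sum>j<N. U j) + 6 * A * (real N * c\<^sup>2) + 6 * (\<Sum>j<N. R j)"
    by (simp add: sum.distrib sum_distrib_left)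
  also have "\<dots> \<le> 2 * (\<Sum>j<N. U j) + 6 * A * (P * (\<Sum>j<N. R j) / \<alpha>\<^sup>2) + 6 * (\<Sum>j<N. R j)"
    using mult_left_mono[OF \<open>real N * c\<^sup>2 \<le> P * (\<Sum>j<N. R j) / \<alpha>\<^sup>2\<close>, of "6 * A"] A by simp
  also have "\<dots> = 2 * (\<Sum>j<N. U j) + 6 * (1 + A * P / \<alpha>\<^sup>2) * (\<Sum>j<N. R j)"
    by (simp add: algebra_simps)
  also have "\<dots> \<le> 2 * (\<Sum>j<N. U j) + 6 * (1 + A * P / \<alpha>\<^sup>2) * (K * (\<Sum>j<N. U j))"
    using RU A P unfolding sum_distrib_left by (intro add_left_mono mult_left_mono sum_mono) auto
  also have "\<dots> = (2 + 6 * K * (1 + A * P / \<alpha>\<^sup>2)) * (\<Sum>j<N. U j)"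
    by (simp add: algebra_simps)
  finally show ?thesis .
qed


lemma integral_phi_dPhi_neq_0:
  assumes "0 < p" "p < 2"
  shows "(LINT x:{0..}|lborel. phi p x * dPhi p x) \<noteq> 0"
proof -
  have "1 / (2 * p) - 1 / 4 \<noteq> 0" using assms by (simp add: field_simps)
  then show ?thesis using integral_phi_sq_pos[OF assms(1)] by (simp add: integral_phi_dPhi[OF assms(1)])
qed

lemma H1_norm_sq_le_Lminus_form:
  assumes p: "0 < p" "p < 2" and N: "0 < N"
    and H: "H1_Gamma_deriv N W W'" and orth: "L2_inner N W (\<lambda>j. dPhi p) = 0"
  defines "K \<equiv> 4 * (1 / p + 1 / (2 * tanh 1))\<^sup>2"
    and "A \<equiv> LINT x:{0..}|lborel. (phi p x)\<^sup>2"
    and "P \<equiv> LINT x:{0..}|lborel. (dPhi p x)\<^sup>2"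
    and "\<alpha> \<equiv> LINT x:{0..}|lborel. phi p x * dPhi p x"
  shows "H1_norm_sq N W W' \<le> (2 + 6 * K * (1 + A * P / \<alpha>\<^sup>2)) * Lminus_form p N W W'"
proof -
  define c where "c = W 0 0"
  have Hj: "H1_halfline_deriv (W j) (W' j)" and cj: "W j 0 = c" if "j < N" for j
    using H that N unfolding H1_Gamma_deriv_def c_def by blast+
  define U where "U j = (LINT x:{0..}|lborel. (Aop p (W j) (W' j) x)\<^sup>2)" for j
  define R where "R j = (LINT x:{0..}|lborel. (W j x - c * phi p x)\<^sup>2)" for j
  define S where "S j = (LINT x:{0..}|lborel. (W j x - c * phi p x) * dPhi p x)" for j
  have "Lminus_form p N W W' = (\<Sum>j<N. U j)"
    unfolding Lminus_form_def U_def by (intro sum.cong) (simp_all add: Lminus_edge_eq_Aop_sq[OF p(1) Hj])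
  moreover have "H1_norm_sq N W W' \<le> (2 + 6 * K * (1 + A * P / \<alpha>\<^sup>2)) * (\<Sum>j<N. U j)"
    unfolding H1_norm_sq_def
  proof (rule star_sum_estimate[where c=c and S=S and R=R])
    have "(\<Sum>j<N. c * \<alpha> + S j) = L2_inner N W (\<lambda>j. dPhi p)"
      unfolding L2_inner_def \<alpha>_def S_def
      by (intro sum.cong) (simp_all add: edge_dPhi_decomposition(1)[OF p(1) Hj] cj)
    then show "(\<Sum>j<N. c * \<alpha> + S j) = 0" using orth by simp
    show "R j \<le> K * U j" if "j < N" for j
      using edge_remainder_estimate[OF p(1) Hj[OF that]] unfolding K_def U_def R_def cj[OF that] .
    show "(S j)\<^sup>2 \<le> R j * P" if "j < N" for j
      using edge_dPhi_decomposition(2)[OF p(1) Hj[OF that]] unfolding S_def R_def P_def cj[OF that] .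
    show "(LINT x:{0..}|lborel. (W' j x)\<^sup>2 + (W j x)\<^sup>2) \<le> 2 * U j + 6 * c\<^sup>2 * A + 6 * R j"
      if "j < N" for j
      using edge_H1_norm_estimate[OF p(1) Hj[OF that]] unfolding U_def A_def R_def cj[OF that] .
    show "\<alpha> \<noteq> 0" unfolding \<alpha>_def by (rule integral_phi_dPhi_neq_0[OF p])
    show "0 \<le> A" "0 \<le> P" unfolding A_def P_def by (simp_all add: set_integral_nonneg)
  qed (rule N)
  ultimately show ?thesis by simp
qed

theorem lemma5p5:
  fixes N :: nat and p :: real
  assumes "N \<ge> 3" and "0 < p" and "p < 2"
  shows "\<exists>C>0. \<forall>W W'. H1_Gamma_deriv N W W' \<longrightarrow>
           L2_inner N W (\<lambda>j. dPhi p) = 0 \<longrightarrow>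
           Lminus_form p N W W' \<ge> C * H1_norm_sq N W W'"
proof -
  define D where "D = 2 + 6 * (4 * (1 / p + 1 / (2 * tanh 1))\<^sup>2) *
    (1 + (LINT x:{0..}|lborel. (phi p x)\<^sup>2) * (LINT x:{0..}|lborel. (dPhi p x)\<^sup>2) /
         (LINT x:{0..}|lborel. phi p x * dPhi p x)\<^sup>2)"
  have "0 \<le> (LINT x:{0..}|lborel. (phi p x)\<^sup>2)" "0 \<le> (LINT x:{0..}|lborel. (dPhi p x)\<^sup>2)"
    by (simp_all add: set_integral_nonneg)
  then have "0 < D" unfolding D_def
    by (intro add_pos_nonneg mult_nonneg_nonneg add_nonneg_nonneg divide_nonneg_nonneg) auto
  moreover have "H1_norm_sq N W W' \<le> D * Lminus_form p N W W'"
    if "H1_Gamma_deriv N W W'" "L2_inner N W (\<lambda>j. dPhi p) = 0" for W W'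
    unfolding D_def using H1_norm_sq_le_Lminus_form[OF assms(2,3) _ that] assms(1) by simp
  ultimately show ?thesis
    by (intro exI[of _ "1 / D"]) (auto simp: field_simps)
qed

end
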